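(* Let $F$ be the unique series in $\mathbb{Q}[x,\bar x,y,\bar y][[t]]$ satisfying $(1-St)F=\bar x\bar y-\bar x t[x^0]F-\bar y t[y^0]F$, and let $F_1=[x^<][y^<]F$. Then $$F_1(x,y,t)=\bar x\bar y\,Q(\bar x,\bar y,t),$$ where $Q(x,y,t)=\sum_{n\ge0}\sum_{i,j\ge0}a_{i,j,n}x^iy^jt^n$ and $a_{i,j,n}$ is the number of walks in $\mathbb{N}^2$ starting at $(0,0)$, ending at $(i,j)$, with $n$ steps from $\{(1,0),(-1,0),(0,1),(0,-1)\}$. Moreover $$F_1(x,y,t)-F_1(\bar x,y,t)=[y^<]\,\frac{xy-\bar xy-x\bar y+\bar x\bar y}{1-St}.$$
   Context: Notation: $\bar x=x^{-1}$, $\bar y=y^{-1}$, $S=x+y+\bar x+\bar y$; series in $\mathbb{Q}[x,\bar x,y,\bar y][[t]]$, with $1/(1-St)$ expanded as a power series in $t$. For $G=\sum c_{i,j,n}x^iy^jt^n$: $[x^0]G=\sum_{j,n}c_{0,j,n}y^jt^n$, $[y^0]G=\sum_{i,n}c_{i,0,n}x^it^n$; $[x^<]G=\sum_{i<0}c_{i,j,n}x^iy^jt^n$ (terms with negative $x$-exponent), and analogously $[y^<]$ for $y$. *)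

theory Defs
  imports Complex_Main
begin

text \<open>A series G in Q[x,1/x,y,1/y][[t]] is represented by its coefficient function:
  G i j n is the coefficient of x^i y^j t^n.\<close>
type_synonym lser = "int \<Rightarrow> int \<Rightarrow> nat \<Rightarrow> rat"

definition is_lser :: "lser \<Rightarrow> bool" where
  "is_lser G \<longleftrightarrow> (\<forall>n. finite {(i, j). G i j n \<noteq> 0})"

definition monom :: "int \<Rightarrow> int \<Rightarrow> nat \<Rightarrow> lser" where
  "monom a b k = (\<lambda>i j n. if i = a \<and> j = b \<and> n = k then 1 else 0)"

definition mono_mul :: "int \<Rightarrow> int \<Rightarrow> nat \<Rightarrow> lser \<Rightarrow> lser" where
  "mono_mul a b k G = (\<lambda>i j n. if k \<le> n then G (i - a) (j - b) (n - k) else 0)"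

text \<open>Multiplication by S = x + 1/x + y + 1/y.\<close>
definition S_mul :: "lser \<Rightarrow> lser" where
  "S_mul G = (\<lambda>i j n. G (i - 1) j n + G (i + 1) j n + G i (j - 1) n + G i (j + 1) n)"

definition coeff_x0 :: "lser \<Rightarrow> lser" where
  "coeff_x0 G = (\<lambda>i j n. if i = 0 then G 0 j n else 0)"

definition coeff_y0 :: "lser \<Rightarrow> lser" where
  "coeff_y0 G = (\<lambda>i j n. if j = 0 then G i 0 n else 0)"

text \<open>[x^<] G and [y^<] G: terms with negative x- (resp. y-) exponent.\<close>
definition xneg :: "lser \<Rightarrow> lser" where
  "xneg G = (\<lambda>i j n. if i < 0 then G i j n else 0)"

definition yneg :: "lser \<Rightarrow> lser" where
  "yneg G = (\<lambda>i j n. if j < 0 then G i j n else 0)"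

definition subst_xinv :: "lser \<Rightarrow> lser" where
  "subst_xinv G = (\<lambda>i j n. G (- i) j n)"

definition subst_yinv :: "lser \<Rightarrow> lser" where
  "subst_yinv G = (\<lambda>i j n. G i (- j) n)"

text \<open>Coefficients of the Laurent polynomial S^n.\<close>
fun powS :: "nat \<Rightarrow> int \<Rightarrow> int \<Rightarrow> rat" where
  "powS 0 i j = (if i = 0 \<and> j = 0 then 1 else 0)"
| "powS (Suc n) i j = powS n (i - 1) j + powS n (i + 1) j + powS n i (j - 1) + powS n i (j + 1)"

text \<open>1/(1 - S t) = sum_n S^n t^n, expanded as a power series in t.\<close>
definition recip_1_minus_St :: lser where
  "recip_1_minus_St = (\<lambda>i j n. powS n i j)"

text \<open>Multiplication by the Laurent polynomial x y - (1/x) y - x (1/y) + (1/x)(1/y).\<close>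
definition numer_mul :: "lser \<Rightarrow> lser" where
  "numer_mul G = (\<lambda>i j n. G (i - 1) (j - 1) n - G (i + 1) (j - 1) n
                          - G (i - 1) (j + 1) n + G (i + 1) (j + 1) n)"

definition steps4 :: "(int \<times> int) set" where
  "steps4 = {(1, 0), (-1, 0), (0, 1), (0, -1)}"

definition endpoint :: "(int \<times> int) list \<Rightarrow> int \<times> int" where
  "endpoint ws = (sum_list (map fst ws), sum_list (map snd ws))"

definition quadrant_walks :: "int \<Rightarrow> int \<Rightarrow> nat \<Rightarrow> (int \<times> int) list set" where
  "quadrant_walks i j n = {ws. length ws = n \<and> set ws \<subseteq> steps4
      \<and> (\<forall>k \<le> n. 0 \<le> fst (endpoint (take k ws)) \<and> 0 \<le> snd (endpoint (take k ws)))
      \<and> endpoint ws = (i, j)}"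

definition a_walks :: "nat \<Rightarrow> nat \<Rightarrow> nat \<Rightarrow> nat" where
  "a_walks i j n = card (quadrant_walks (int i) (int j) n)"

definition Qser :: lser where
  "Qser = (\<lambda>i j n. if 0 \<le> i \<and> 0 \<le> j then of_nat (a_walks (nat i) (nat j) n) else 0)"

definition satisfies_eqn :: "lser \<Rightarrow> bool" where
  "satisfies_eqn F \<longleftrightarrow> (\<forall>i j n.
     F i j n - mono_mul 0 0 1 (S_mul F) i j n
       = monom (-1) (-1) 0 i j n - mono_mul (-1) 0 1 (coeff_x0 F) i j n
         - mono_mul 0 (-1) 1 (coeff_y0 F) i j n)"

end

theory Submission
  imports Defs
begin

text \<open>Comparing coefficients of t^(n+1) in the functional equation gives a recurrence for F in n,
  which on the negative quadrant i, j < 0 is exactly the last-step recurrence for quadrant walks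
  ending at (-i-1, -j-1): the boundary terms [x^0]F and [y^0]F cancel the steps that would leave
  the quadrant. The reflection principle expresses the walk counts as the orbit sum of the
  coefficients of S^n under the reflections i \<mapsto> -2-i and j \<mapsto> -2-j; after the shift
  (i, j) \<mapsto> (-i-1, -j-1) this orbit sum is the coefficient of the numerator times 1/(1 - S t),
  which is odd in i. Hence F1 - F1(1/x) is that coefficient on the whole half plane j < 0.\<close>

lemma endpoint_snoc:
  "endpoint (ws @ [s]) = (fst (endpoint ws) + fst s, snd (endpoint ws) + snd s)"
  by (simp add: endpoint_def)

lemma endpoint_nonneg_if_quadrant_walk:
  assumes "ws \<in> quadrant_walks i j n"
  shows "0 \<le> i \<and> 0 \<le> j"
proof -
  have "length ws = n" "endpoint ws = (i, j)"
    and "0 \<le> fst (endpoint (take n ws)) \<and> 0 \<le> snd (endpoint (take n ws))"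
    using assms unfolding quadrant_walks_def by blast+
  then show ?thesis by simp
qed

lemma finite_quadrant_walks: "finite (quadrant_walks i j n)"
proof (rule finite_subset)
  show "quadrant_walks i j n \<subseteq> {ws. set ws \<subseteq> steps4 \<and> length ws = n}"
    unfolding quadrant_walks_def by blast
  show "finite {ws. set ws \<subseteq> steps4 \<and> length ws = n}"
    by (rule finite_lists_length_eq) (simp add: steps4_def)
qed

lemma quadrant_walks_0: "quadrant_walks i j 0 = (if i = 0 \<and> j = 0 then {[]} else {})"
  by (auto simp: quadrant_walks_def endpoint_def)

lemma snoc_in_quadrant_walks_iff:
  assumes "0 \<le> i" "0 \<le> j"
  shows "ws @ [s] \<in> quadrant_walks i j (Suc n) \<longleftrightarrow>
         s \<in> steps4 \<and> ws \<in> quadrant_walks (i - fst s) (j - snd s) n"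
proof (cases "length ws = n")
  case True
  define in_quadrant where
    "in_quadrant = (\<lambda>vs. 0 \<le> fst (endpoint vs) \<and> 0 \<le> snd (endpoint vs))"
  have "(\<forall>k \<le> Suc n. in_quadrant (take k (ws @ [s]))) \<longleftrightarrow>
        (\<forall>k \<le> n. in_quadrant (take k ws)) \<and> in_quadrant (ws @ [s])"
    using True by (auto simp: le_Suc_eq)
  moreover have "endpoint (ws @ [s]) = (i, j) \<Longrightarrow> in_quadrant (ws @ [s])"
    using assms by (simp add: in_quadrant_def)
  ultimately show ?thesis
    using True unfolding quadrant_walks_def
    by (auto simp: endpoint_snoc in_quadrant_def)
next
  case False
  then show ?thesis unfolding quadrant_walks_def by auto
qed

lemma quadrant_walks_Suc:
  assumes "0 \<le> i" "0 \<le> j"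
  shows "quadrant_walks i j (Suc n) =
    (\<Union>s\<in>steps4. (\<lambda>ws. ws @ [s]) ` quadrant_walks (i - fst s) (j - snd s) n)"
proof (intro set_eqI iffI)
  fix vs assume vs: "vs \<in> quadrant_walks i j (Suc n)"
  then have "vs \<noteq> []" by (auto simp: quadrant_walks_def)
  then obtain ws s where "vs = ws @ [s]" by (metis rev_exhaust)
  with vs show "vs \<in> (\<Union>s\<in>steps4. (\<lambda>ws. ws @ [s]) ` quadrant_walks (i - fst s) (j - snd s) n)"
    using snoc_in_quadrant_walks_iff[OF assms] by blast
qed (use snoc_in_quadrant_walks_iff[OF assms] in blast)

lemma card_quadrant_walks_Suc:
  assumes "0 \<le> i" "0 \<le> j"
  shows "card (quadrant_walks i j (Suc n)) =
      card (quadrant_walks (i - 1) j n) + card (quadrant_walks (i + 1) j n)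
    + card (quadrant_walks i (j - 1) n) + card (quadrant_walks i (j + 1) n)"
proof -
  have "card (quadrant_walks i j (Suc n)) =
    (\<Sum>s\<in>steps4. card ((\<lambda>ws. ws @ [s]) ` quadrant_walks (i - fst s) (j - snd s) n))"
    unfolding quadrant_walks_Suc[OF assms]
    by (rule card_UN_disjoint) (simp add: steps4_def, simp add: finite_quadrant_walks, blast)
  also have "\<dots> = (\<Sum>s\<in>steps4. card (quadrant_walks (i - fst s) (j - snd s) n))"
    by (intro sum.cong refl card_image) (auto simp: inj_on_def)
  finally show ?thesis by (simp add: steps4_def)
qed

lemma Qser_outside_quadrant: "\<not> (0 \<le> i \<and> 0 \<le> j) \<Longrightarrow> Qser i j n = 0"
  by (auto simp: Qser_def)

lemma Qser_eq_card: "Qser i j n = of_nat (card (quadrant_walks i j n))"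
proof (cases "0 \<le> i \<and> 0 \<le> j")
  case False
  then have "quadrant_walks i j n = {}"
    using endpoint_nonneg_if_quadrant_walk by blast
  with False show ?thesis by (simp add: Qser_outside_quadrant)
qed (simp add: Qser_def a_walks_def)

lemma Qser_0: "Qser i j 0 = (if i = 0 \<and> j = 0 then 1 else 0)"
  by (simp add: Qser_eq_card quadrant_walks_0)

lemma Qser_Suc:
  "Qser i j (Suc n) = (if 0 \<le> i \<and> 0 \<le> j then
     Qser (i - 1) j n + Qser (i + 1) j n + Qser i (j - 1) n + Qser i (j + 1) n else 0)"
proof (cases "0 \<le> i \<and> 0 \<le> j")
  case True
  then show ?thesis by (simp add: Qser_eq_card card_quadrant_walks_Suc)
qed (metis Qser_outside_quadrant)

lemma powS_reflect_x: "i + i' = 0 \<Longrightarrow> powS n i j = powS n i' j"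
proof (induction n arbitrary: i i' j)
  case (Suc n)
  have "powS n (i - 1) j = powS n (i' + 1) j" "powS n (i + 1) j = powS n (i' - 1) j"
    "powS n i (j - 1) = powS n i' (j - 1)" "powS n i (j + 1) = powS n i' (j + 1)"
    using Suc by (intro Suc.IH; simp)+
  then show ?case by simp
qed simp

lemma powS_reflect_y: "j + j' = 0 \<Longrightarrow> powS n i j = powS n i j'"
proof (induction n arbitrary: i j j')
  case (Suc n)
  have "powS n (i - 1) j = powS n (i - 1) j'" "powS n (i + 1) j = powS n (i + 1) j'"
    "powS n i (j - 1) = powS n i (j' + 1)" "powS n i (j + 1) = powS n i (j' - 1)"
    using Suc by (intro Suc.IH; simp)+
  then show ?case by simp
qed simp

text \<open>The signed orbit of (i, j) under the reflections in the lines x = -1 and y = -1 bounding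
  the quadrant.\<close>
definition powS_orbit_sum :: "nat \<Rightarrow> int \<Rightarrow> int \<Rightarrow> rat" where
  "powS_orbit_sum n i j =
     powS n i j - powS n (-i - 2) j - powS n i (-j - 2) + powS n (-i - 2) (-j - 2)"

lemma powS_orbit_sum_Suc:
  "powS_orbit_sum (Suc n) i j = powS_orbit_sum n (i - 1) j + powS_orbit_sum n (i + 1) j
     + powS_orbit_sum n i (j - 1) + powS_orbit_sum n i (j + 1)"
  by (simp add: powS_orbit_sum_def algebra_simps)

lemma powS_orbit_sum_0:
  "0 \<le> i \<Longrightarrow> 0 \<le> j \<Longrightarrow> powS_orbit_sum 0 i j = (if i = 0 \<and> j = 0 then 1 else 0)"
  by (simp add: powS_orbit_sum_def)

lemma powS_orbit_sum_wall_x: "powS_orbit_sum n (-1) j = 0"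
  by (simp add: powS_orbit_sum_def)

lemma powS_orbit_sum_wall_y: "powS_orbit_sum n i (-1) = 0"
  by (simp add: powS_orbit_sum_def)

lemma Qser_eq_powS_orbit_sum:
  "Qser i j n = (if 0 \<le> i \<and> 0 \<le> j then powS_orbit_sum n i j else 0)"
proof (induction n arbitrary: i j)
  case 0
  then show ?case by (simp add: Qser_0 powS_orbit_sum_0)
next
  case (Suc n)
  have on_closure: "Qser i' j' n = powS_orbit_sum n i' j'" if "-1 \<le> i'" "-1 \<le> j'" for i' j'
    using Suc.IH[of i' j'] that powS_orbit_sum_wall_x powS_orbit_sum_wall_y
    by (cases "i' = -1 \<or> j' = -1") auto
  show ?case
    by (simp add: Qser_Suc powS_orbit_sum_Suc on_closure)
qed

lemma numer_coeff_eq_powS_orbit_sum: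
  "numer_mul recip_1_minus_St i j n = powS_orbit_sum n (-i - 1) (-j - 1)"
proof -
  have "powS n (-i - 1) k = powS n (i + 1) k" "powS n k (-j - 1) = powS n k (j + 1)" for k
    by (rule powS_reflect_x powS_reflect_y; simp)+
  then show ?thesis
    by (simp add: numer_mul_def recip_1_minus_St_def powS_orbit_sum_def)
qed

lemma numer_coeff_odd_x:
  "numer_mul recip_1_minus_St (-i) j n = - numer_mul recip_1_minus_St i j n"
proof -
  have "powS n (-i - 1) k = powS n (i + 1) k" "powS n (-i + 1) k = powS n (i - 1) k" for k
    by (rule powS_reflect_x; simp)+
  then show ?thesis
    by (simp add: numer_mul_def recip_1_minus_St_def)
qed

lemma satisfies_eqn_0:
  assumes "satisfies_eqn F"
  shows "F i j 0 = (if i = -1 \<and> j = -1 then 1 else 0)"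
  using assms[unfolded satisfies_eqn_def, rule_format, of i j 0]
  by (simp add: mono_mul_def monom_def)

lemma satisfies_eqn_Suc:
  assumes "satisfies_eqn F"
  shows "F i j (Suc n) = F (i - 1) j n + F (i + 1) j n + F i (j - 1) n + F i (j + 1) n
     - (if i = -1 then F 0 j n else 0) - (if j = -1 then F i 0 n else 0)"
  using assms[unfolded satisfies_eqn_def, rule_format, of i j "Suc n"]
  by (simp add: mono_mul_def monom_def S_mul_def coeff_x0_def coeff_y0_def)
    (auto simp: algebra_simps)

lemma negative_quadrant_part_eq_Qser:
  assumes F: "satisfies_eqn F"
  shows "xneg (yneg F) i j n = Qser (-i - 1) (-j - 1) n"
proof (induction n arbitrary: i j)
  case 0
  then show ?case by (auto simp: xneg_def yneg_def satisfies_eqn_0[OF F] Qser_0)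
next
  case (Suc n)
  show ?case
  proof (cases "i < 0 \<and> j < 0")
    case True
    have IH: "F i' j' n = Qser (-i' - 1) (-j' - 1) n" if "i' < 0" "j' < 0" for i' j'
      using Suc.IH[of i' j'] that by (simp add: xneg_def yneg_def)
    have left: "F (i - 1) j n = Qser (-i) (-j - 1) n"
      using True IH[of "i - 1" j] by simp
    have down: "F i (j - 1) n = Qser (-i - 1) (-j) n"
      using True IH[of i "j - 1"] by simp
    \<comment> \<open>The boundary terms exactly cancel the steps that would leave the negative quadrant.\<close>
    have right: "F (i + 1) j n - (if i = -1 then F 0 j n else 0) = Qser (-i - 2) (-j - 1) n"
      using True IH[of "i + 1" j]
      by (cases "i = -1") (simp_all add: Qser_outside_quadrant algebra_simps)
    have up: "F i (j + 1) n - (if j = -1 then F i 0 n else 0) = Qser (-i - 1) (-j - 2) n"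
      using True IH[of i "j + 1"]
      by (cases "j = -1") (simp_all add: Qser_outside_quadrant algebra_simps)
    have "xneg (yneg F) i j (Suc n) =
        F (i - 1) j n + (F (i + 1) j n - (if i = -1 then F 0 j n else 0))
        + F i (j - 1) n + (F i (j + 1) n - (if j = -1 then F i 0 n else 0))"
      using True by (simp add: xneg_def yneg_def satisfies_eqn_Suc[OF F])
    also have "\<dots> = Qser (-i) (-j - 1) n + Qser (-i - 2) (-j - 1) n
        + Qser (-i - 1) (-j) n + Qser (-i - 1) (-j - 2) n"
      unfolding left right down up ..
    also have "\<dots> = Qser (-i - 1) (-j - 1) (Suc n)"
      using True by (simp add: Qser_Suc algebra_simps)
    finally show ?thesis .
  next
    case False
    then show ?thesis by (auto simp: xneg_def yneg_def Qser_outside_quadrant)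
  qed
qed

lemma negative_quadrant_part_eq_numer_coeff:
  assumes "satisfies_eqn F"
  shows "xneg (yneg F) i j n = (if i < 0 \<and> j < 0 then numer_mul recip_1_minus_St i j n else 0)"
  by (simp add: negative_quadrant_part_eq_Qser[OF assms] Qser_eq_powS_orbit_sum
      numer_coeff_eq_powS_orbit_sum)

theorem mainTheorem2:
  fixes F :: lser
  assumes "is_lser F" and "satisfies_eqn F"
  defines "F1 \<equiv> xneg (yneg F)"
  shows "F1 = mono_mul (-1) (-1) 0 (subst_xinv (subst_yinv Qser))
         \<and> (\<lambda>i j n. F1 i j n - subst_xinv F1 i j n) = yneg (numer_mul recip_1_minus_St)"
proof
  show "F1 = mono_mul (-1) (-1) 0 (subst_xinv (subst_yinv Qser))"
    by (intro ext) (simp add: F1_def mono_mul_def subst_xinv_def subst_yinv_def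
        negative_quadrant_part_eq_Qser[OF assms(2)])
  have "numer_mul recip_1_minus_St 0 j n = 0" for j n
    using numer_coeff_odd_x[of 0 j n] by simp
  then show "(\<lambda>i j n. F1 i j n - subst_xinv F1 i j n) = yneg (numer_mul recip_1_minus_St)"
    unfolding F1_def subst_xinv_def negative_quadrant_part_eq_numer_coeff[OF assms(2)]
    by (intro ext) (auto simp: yneg_def numer_coeff_odd_x)
qed

end
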